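(* Let $\langle X,\tau\rangle$ be a topological space. (a) If $Y\subseteq X$ and the subspace $\langle Y,\tau\restriction Y\rangle$ has a Noetherian base, then $Y$ has a Noetherian outer base in $X$. (b) Every point $p\in X$ has a Noetherian neighbourhood base (i.e. a family of open sets containing $p$, forming a neighbourhood base at $p$, with no infinite strictly $\subseteq$-increasing sequence). (c) If $Y,Z\subseteq X$ both have Noetherian outer bases in $X$, then $Y\cup Z$ also has a Noetherian outer base in $X$.
   Context: A family $\mathcal G$ of sets is Noetherian if $\langle\mathcal G,\subseteq\rangle$ contains no infinite strictly increasing sequence; a Noetherian base is a base which is Noetherian. For $Y\subseteq X$, a family $\mathcal B\subseteq\tau$ is an outer base of $Y$ in $X$ if for every $p\in Y$ the family $\{G\in\mathcal B: p\in G\}$ is a neighbourhood base of $p$ in $X$. A Noetherian outer base is an outer base which is Noetherian. *)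

theory Defs
  imports "HOL-Analysis.Analysis"
begin

definition noetherian_family :: "'a set set \<Rightarrow> bool" where
  "noetherian_family G \<longleftrightarrow>
     \<not> (\<exists>f :: nat \<Rightarrow> 'a set. (\<forall>n. f n \<in> G) \<and> (\<forall>n. f n \<subset> f (Suc n)))"

definition is_base :: "'a topology \<Rightarrow> 'a set set \<Rightarrow> bool" where
  "is_base X B \<longleftrightarrow> (\<forall>G\<in>B. openin X G) \<and>
     (\<forall>U. openin X U \<longrightarrow> (\<exists>C\<subseteq>B. \<Union>C = U))"

definition nbhd_base :: "'a topology \<Rightarrow> 'a \<Rightarrow> 'a set set \<Rightarrow> bool" where
  "nbhd_base X p N \<longleftrightarrow> (\<forall>G\<in>N. openin X G \<and> p \<in> G) \<and>
     (\<forall>U. openin X U \<and> p \<in> U \<longrightarrow> (\<exists>G\<in>N. G \<subseteq> U))"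

definition outer_base :: "'a topology \<Rightarrow> 'a set \<Rightarrow> 'a set set \<Rightarrow> bool" where
  "outer_base X Y B \<longleftrightarrow> (\<forall>G\<in>B. openin X G) \<and>
     (\<forall>p\<in>Y. nbhd_base X p {G\<in>B. p \<in> G})"

end

theory Submission
  imports Defs
begin

text \<open>Fix a well-founded total relation \<open>R\<close> on sets, e.g. the strict part of a
  well-order. Given a Noetherian base \<open>B\<close> of the subspace \<open>Y\<close>, consider the open sets \<open>U\<close>
  whose trace \<open>U \<inter> Y\<close> lies in \<open>B\<close> and which are \<open>R\<close>-minimal among the open subsets of \<open>U\<close>
  with the same trace. An open neighbourhood \<open>S\<close> of a point of \<open>Y\<close> contains a member of
  \<open>B\<close> around that point, and \<open>R\<close>-minimality picks a lift of it inside \<open>S\<close>; so these sets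
  form an outer base of \<open>Y\<close>. Along a strictly increasing chain of them the traces increase
  in \<open>B\<close> and hence stabilise; from then on minimality and totality put each member
  \<open>R\<close>-below its predecessor, contradicting well-foundedness. Part (b) is the case
  \<open>Y = {p}\<close> with base \<open>{{p}}\<close>. For (c) take the union of the two outer bases: a strictly
  increasing chain in \<open>B \<union> C\<close> has infinitely many members in \<open>B\<close> or in \<open>C\<close>.\<close>

lemma noetherian_family_subset:
  "noetherian_family B \<Longrightarrow> C \<subseteq> B \<Longrightarrow> noetherian_family C"
  unfolding noetherian_family_def by blast

lemma noetherian_family_finite_strict_steps:
  assumes "noetherian_family B" and "mono g" and "\<forall>n\<in>I. g n \<in> B \<and> g n \<subset> g (Suc n)"
  shows "finite I"
proof (rule ccontr)
  assume "infinite I"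
  define e where "e = enumerate I"
  have "strict_mono e"
    using \<open>infinite I\<close> by (simp add: e_def strict_mono_enumerate)
  have e_in: "e k \<in> I" for k
    using \<open>infinite I\<close> by (simp add: e_def enumerate_in_set)
  have chain: "g (e k) \<subset> g (e (Suc k))" for k
  proof -
    have "g (e k) \<subset> g (Suc (e k))"
      using e_in[of k] assms(3) by simp
    moreover have "e k < e (Suc k)"
      using \<open>strict_mono e\<close> by (rule strict_monoD) simp
    then have "g (Suc (e k)) \<subseteq> g (e (Suc k))"
      by (intro monoD[OF \<open>mono g\<close>]) simp
    ultimately show ?thesis
      by (rule psubset_subset_trans)
  qed
  moreover have "g (e k) \<in> B" for k
    using e_in[of k] assms(3) by simp
  ultimately have "\<exists>f. (\<forall>n. f n \<in> B) \<and> (\<forall>n. f n \<subset> f (Suc n))"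
    by (intro exI[of _ "\<lambda>k. g (e k)"]) simp
  with assms(1) show False
    unfolding noetherian_family_def by (rule notE)
qed

lemma noetherian_family_Un:
  assumes "noetherian_family B" and "noetherian_family C"
  shows "noetherian_family (B \<union> C)"
  unfolding noetherian_family_def
proof
  assume "\<exists>f. (\<forall>n. f n \<in> B \<union> C) \<and> (\<forall>n. f n \<subset> f (Suc n))"
  then obtain f where in_BC: "\<And>n. f n \<in> B \<union> C" and step: "\<And>n. f n \<subset> f (Suc n)"
    by blast
  have "mono f"
    using step by (intro incseq_SucI psubset_imp_subset)
  have "finite {n. f n \<in> B}"
    by (rule noetherian_family_finite_strict_steps[OF assms(1) \<open>mono f\<close>]) (simp add: step)
  moreover have "finite {n. f n \<in> C}"
    by (rule noetherian_family_finite_strict_steps[OF assms(2) \<open>mono f\<close>]) (simp add: step)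
  ultimately have "finite ({n. f n \<in> B} \<union> {n. f n \<in> C})"
    by (rule finite_UnI)
  moreover have "UNIV \<subseteq> {n. f n \<in> B} \<union> {n. f n \<in> C}"
    using in_BC by auto
  ultimately have "finite (UNIV :: nat set)"
    by (rule finite_subset[rotated])
  then show False
    by simp
qed

lemma noetherian_family_mono_chain_stabilises:
  assumes "noetherian_family B" and "mono g" and "\<And>n. g n \<in> B"
  obtains N where "\<And>n. n \<ge> N \<Longrightarrow> g (Suc n) = g n"
proof -
  have "finite {n. g n \<noteq> g (Suc n)}"
    by (rule noetherian_family_finite_strict_steps[OF assms(1,2)])
      (use assms(3) incseq_SucD[OF assms(2)] in \<open>simp add: psubset_eq\<close>)
  then obtain N where N: "\<And>n. g n \<noteq> g (Suc n) \<Longrightarrow> n < N"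
    unfolding finite_nat_set_iff_bounded by blast
  have "g (Suc n) = g n" if "n \<ge> N" for n
    using N[of n] that by force
  then show ?thesis
    by (rule that)
qed

lemma exists_total_wf_rel: "\<exists>R :: 'a rel. wf R \<and> total R"
proof -
  obtain r :: "'a rel" where "Well_order r" and "Field r = UNIV"
    using well_ordering by (elim exE conjE)
  then have "wf (r - Id)" and "total (r - Id)"
    by (simp_all add: well_order_on_def linear_order_on_def)
  then show ?thesis
    by blast
qed

lemma is_base_openin: "is_base X B \<Longrightarrow> G \<in> B \<Longrightarrow> openin X G"
  unfolding is_base_def by blast

lemma is_base_nbhdE:
  assumes "is_base X B" and "openin X U" and "p \<in> U"
  obtains G where "G \<in> B" and "p \<in> G" and "G \<subseteq> U"
proof -
  have "\<exists>C\<subseteq>B. \<Union>C = U"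
    using assms(1,2) unfolding is_base_def by blast
  then show ?thesis
    using that \<open>p \<in> U\<close> by blast
qed

definition minimal_lifts :: "'a topology \<Rightarrow> 'a set \<Rightarrow> 'a set set \<Rightarrow> 'a set rel \<Rightarrow> 'a set set"
  where "minimal_lifts X Y B R = {U. openin X U \<and> U \<inter> Y \<in> B \<and>
      (\<forall>V. openin X V \<and> V \<subseteq> U \<and> V \<inter> Y = U \<inter> Y \<longrightarrow> (V, U) \<notin> R)}"

lemma minimal_lift_below:
  assumes "wf R" and "is_base (subtopology X Y) B"
    and "openin X S" and "p \<in> S" and "p \<in> Y"
  obtains U where "U \<in> minimal_lifts X Y B R" and "p \<in> U" and "U \<subseteq> S"
proof -
  have "openin (subtopology X Y) (S \<inter> Y)"
    using \<open>openin X S\<close> by (rule openin_subtopology_Int)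
  then obtain G where "G \<in> B" and "p \<in> G" and "G \<subseteq> S \<inter> Y"
    using is_base_nbhdE[OF assms(2), of "S \<inter> Y" p] assms(4,5) by blast
  then have "openin (subtopology X Y) G"
    using assms(2) by (simp add: is_base_openin)
  then obtain W where "openin X W" and "G = W \<inter> Y"
    unfolding openin_subtopology by blast
  define lifts where "lifts = {V. openin X V \<and> V \<subseteq> S \<and> V \<inter> Y = G}"
  have "S \<inter> W \<in> lifts"
    using \<open>openin X S\<close> \<open>openin X W\<close> \<open>G = W \<inter> Y\<close> \<open>G \<subseteq> S \<inter> Y\<close>
    unfolding lifts_def by blast
  then obtain U where "U \<in> lifts" and U_min: "\<And>V. (V, U) \<in> R \<Longrightarrow> V \<notin> lifts"
    by (rule wfE_min[OF \<open>wf R\<close>]) blast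
  have "U \<in> minimal_lifts X Y B R"
    using \<open>U \<in> lifts\<close> U_min \<open>G \<in> B\<close> unfolding lifts_def minimal_lifts_def by blast
  moreover have "p \<in> U" and "U \<subseteq> S"
    using \<open>U \<in> lifts\<close> \<open>p \<in> G\<close> unfolding lifts_def by blast+
  ultimately show ?thesis
    by (rule that)
qed

lemma outer_base_minimal_lifts:
  assumes "wf R" and "is_base (subtopology X Y) B"
  shows "outer_base X Y (minimal_lifts X Y B R)"
proof -
  have "openin X U" if "U \<in> minimal_lifts X Y B R" for U
    using that by (simp add: minimal_lifts_def)
  moreover have "\<exists>U\<in>{U \<in> minimal_lifts X Y B R. p \<in> U}. U \<subseteq> S"
    if "p \<in> Y" and "openin X S \<and> p \<in> S" for p S
    using minimal_lift_below[OF assms, of S p] that by blast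
  ultimately show ?thesis
    unfolding outer_base_def nbhd_base_def by blast
qed

lemma noetherian_minimal_lifts:
  assumes "wf R" and "total R" and "noetherian_family B"
  shows "noetherian_family (minimal_lifts X Y B R)"
  unfolding noetherian_family_def
proof
  assume "\<exists>f. (\<forall>n. f n \<in> minimal_lifts X Y B R) \<and> (\<forall>n. f n \<subset> f (Suc n))"
  then obtain f where f_in: "\<And>n. f n \<in> minimal_lifts X Y B R" and step: "\<And>n. f n \<subset> f (Suc n)"
    by blast
  have "mono (\<lambda>n. f n \<inter> Y)"
    using step by (auto intro!: incseq_SucI)
  moreover have "f n \<inter> Y \<in> B" for n
    using f_in[of n] by (simp add: minimal_lifts_def)
  ultimately obtain N where N: "\<And>n. n \<ge> N \<Longrightarrow> f (Suc n) \<inter> Y = f n \<inter> Y"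
    using noetherian_family_mono_chain_stabilises[OF assms(3)] by blast
  have "(f (Suc n), f n) \<in> R" if "n \<ge> N" for n
  proof -
    have "(f n, f (Suc n)) \<notin> R"
      using f_in[of n] f_in[of "Suc n"] step[of n] N[OF that]
      by (simp add: minimal_lifts_def)
    moreover have "f n \<noteq> f (Suc n)"
      using step[of n] by blast
    ultimately show ?thesis
      using \<open>total R\<close> by (auto simp: total_on_def)
  qed
  then show False
    using wf_no_infinite_down_chainE[OF \<open>wf R\<close>, of "\<lambda>i. f (N + i)"] by auto
qed

lemma outer_base_if_subspace_base:
  assumes "is_base (subtopology X Y) B" and "noetherian_family B"
  shows "\<exists>A. outer_base X Y A \<and> noetherian_family A"
proof -
  obtain R :: "'a set rel" where "wf R" and "total R"
    using exists_total_wf_rel by blast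
  have "outer_base X Y (minimal_lifts X Y B R)"
    using \<open>wf R\<close> assms(1) by (rule outer_base_minimal_lifts)
  moreover have "noetherian_family (minimal_lifts X Y B R)"
    using \<open>wf R\<close> \<open>total R\<close> assms(2) by (rule noetherian_minimal_lifts)
  ultimately show ?thesis
    by blast
qed

lemma is_base_subtopology_singleton:
  assumes "p \<in> topspace X"
  shows "is_base (subtopology X {p}) {{p}}"
proof -
  have "openin (subtopology X {p}) {p}"
    using assms openin_subtopology_Int2[OF openin_topspace, of X "{p}"] by (simp add: Int_absorb1)
  moreover have "U = {} \<or> U = {p}" if "openin (subtopology X {p}) U" for U
    using openin_subset[OF that] by auto
  ultimately show ?thesis
    unfolding is_base_def by (metis Union_empty ccpo_Sup_singleton empty_subsetI singletonD subset_refl)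
qed

lemma noetherian_nbhd_base:
  assumes "p \<in> topspace X"
  shows "\<exists>N. nbhd_base X p N \<and> noetherian_family N"
proof -
  have "noetherian_family {{p}}"
    unfolding noetherian_family_def by auto
  then obtain A where "outer_base X {p} A" and "noetherian_family A"
    using outer_base_if_subspace_base is_base_subtopology_singleton[OF assms] by blast
  have "nbhd_base X p {G \<in> A. p \<in> G}"
    using \<open>outer_base X {p} A\<close> by (simp add: outer_base_def)
  moreover have "noetherian_family {G \<in> A. p \<in> G}"
    using \<open>noetherian_family A\<close> by (rule noetherian_family_subset) blast
  ultimately show ?thesis
    by blast
qed

lemma nbhd_base_mono:
  assumes "nbhd_base X p N" and "N \<subseteq> M" and "\<And>G. G \<in> M \<Longrightarrow> openin X G \<and> p \<in> G"
  shows "nbhd_base X p M"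
  using assms unfolding nbhd_base_def by blast

lemma outer_base_Un:
  assumes "outer_base X Y B" and "outer_base X Z C"
  shows "outer_base X (Y \<union> Z) (B \<union> C)"
  unfolding outer_base_def
proof (intro conjI ballI)
  show open_BC: "openin X G" if "G \<in> B \<union> C" for G
    using that assms unfolding outer_base_def by blast
  fix p
  assume "p \<in> Y \<union> Z"
  then have "nbhd_base X p {G \<in> B. p \<in> G} \<or> nbhd_base X p {G \<in> C. p \<in> G}"
    using assms unfolding outer_base_def by blast
  then show "nbhd_base X p {G \<in> B \<union> C. p \<in> G}"
    by (elim disjE nbhd_base_mono) (use open_BC in auto)
qed

theorem lemma4:
  fixes X :: "'a topology"
  shows "(\<forall>Y. Y \<subseteq> topspace X \<and>
              (\<exists>B. is_base (subtopology X Y) B \<and> noetherian_family B)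
            \<longrightarrow> (\<exists>B. outer_base X Y B \<and> noetherian_family B))
       \<and> (\<forall>p\<in>topspace X. \<exists>N. nbhd_base X p N \<and> noetherian_family N)
       \<and> (\<forall>Y Z. Y \<subseteq> topspace X \<and> Z \<subseteq> topspace X \<and>
              (\<exists>B. outer_base X Y B \<and> noetherian_family B) \<and>
              (\<exists>B. outer_base X Z B \<and> noetherian_family B)
            \<longrightarrow> (\<exists>B. outer_base X (Y \<union> Z) B \<and> noetherian_family B))"
proof (intro conjI allI ballI impI)
  show "\<exists>A. outer_base X Y A \<and> noetherian_family A"
    if "Y \<subseteq> topspace X \<and> (\<exists>B. is_base (subtopology X Y) B \<and> noetherian_family B)" for Y
    using that outer_base_if_subspace_base by blast
  show "\<exists>N. nbhd_base X p N \<and> noetherian_family N" if "p \<in> topspace X" for p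
    using that by (rule noetherian_nbhd_base)
  show "\<exists>A. outer_base X (Y \<union> Z) A \<and> noetherian_family A"
    if "Y \<subseteq> topspace X \<and> Z \<subseteq> topspace X \<and>
        (\<exists>B. outer_base X Y B \<and> noetherian_family B) \<and>
        (\<exists>B. outer_base X Z B \<and> noetherian_family B)" for Y Z
    using that outer_base_Un noetherian_family_Un by blast
qed

end
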